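(* Let $\mathcal M$ be a first-order structure equipped with a dimension satisfying axioms A1–A2. Let $(X_a)_{a\in A}$ be a uniformly definable family of sets indexed by a definable set $A$, with $X_a=X_{a'}$ if and only if $a=a'$. Let $U=\bigcup_{a\in A}X_a$ and, for $0\leq r\leq\dim(A)$, let $U_r=\{x\in U: \dim(\{a\in A: x\in X_a\})=r\}$ and $[X_a]_r=X_a\cap U_r$. Suppose that for some such $r$, $[X_a]_r$ is nonempty and $\dim([X_a]_r)$ does not depend on $a\in A$. Then $\dim(U_r)+r=\dim(A)+\dim([X_a]_r)$.
   Context: The dimension assigns to each nonempty definable set a natural number such that: (A1) if $f:B\to C$ is definable between nonempty definable sets, then $\{c\in C:\dim(f^{-1}(c))=m\}$ is definable for every $m$; (A2) if $f:B\to C$ is definable and all its fibers have dimension $m$, then $\dim B=\dim f(B)+m$. (By A1 the sets $U_r$ and $[X_a]_r$ are definable.) *)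

theory Defs
  imports Main
begin

text \<open>The definable sets (with parameters) of a first-order structure with universe
  of type 'a are modelled, as in van den Dries' notion of a "structure", by a family
  S n of subsets of M^n, where M^n is represented by the lists of length n.\<close>

definition tuples :: "nat \<Rightarrow> 'a list set" where
  "tuples n = {xs. length xs = n}"

definition definable_structure :: "(nat \<Rightarrow> 'a list set set) \<Rightarrow> bool" where
  "definable_structure S \<longleftrightarrow>
     (\<forall>n. S n \<subseteq> Pow (tuples n)) \<and>
     (\<forall>n. {} \<in> S n \<and> tuples n \<in> S n) \<and>
     (\<forall>n A B. A \<in> S n \<longrightarrow> B \<in> S n \<longrightarrow> A \<union> B \<in> S n) \<and>
     (\<forall>n A. A \<in> S n \<longrightarrow> tuples n - A \<in> S n) \<and>
     (\<forall>n A. A \<in> S n \<longrightarrow> {xs @ [y] | xs y. xs \<in> A} \<in> S (Suc n)) \<and>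
     (\<forall>n A. A \<in> S n \<longrightarrow> {y # xs | xs y. xs \<in> A} \<in> S (Suc n)) \<and>
     (\<forall>n i j. i < n \<longrightarrow> j < n \<longrightarrow> {xs \<in> tuples n. xs ! i = xs ! j} \<in> S n) \<and>
     (\<forall>n A. A \<in> S (Suc n) \<longrightarrow> take n ` A \<in> S n) \<and>
     (\<forall>c. {[c]} \<in> S 1)"

definition definable :: "(nat \<Rightarrow> 'a list set set) \<Rightarrow> 'a list set \<Rightarrow> bool" where
  "definable S X \<longleftrightarrow> (\<exists>n. X \<in> S n)"

definition definable_map ::
  "(nat \<Rightarrow> 'a list set set) \<Rightarrow> nat \<Rightarrow> nat \<Rightarrow> ('a list \<Rightarrow> 'a list) \<Rightarrow> 'a list set \<Rightarrow> 'a list set \<Rightarrow> bool" where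
  "definable_map S n m f B C \<longleftrightarrow>
     B \<in> S n \<and> C \<in> S m \<and> f ` B \<subseteq> C \<and> {xs @ f xs | xs. xs \<in> B} \<in> S (n + m)"

definition fiber :: "('a list \<Rightarrow> 'a list) \<Rightarrow> 'a list set \<Rightarrow> 'a list \<Rightarrow> 'a list set" where
  "fiber f B c = {x \<in> B. f x = c}"

text \<open>A dimension: axioms (A1) and (A2). dim is only meaningful on nonempty definable sets.\<close>
definition dimension :: "(nat \<Rightarrow> 'a list set set) \<Rightarrow> ('a list set \<Rightarrow> nat) \<Rightarrow> bool" where
  "dimension S dim \<longleftrightarrow>
     (\<forall>n m f B C k. definable_map S n m f B C \<longrightarrow> B \<noteq> {} \<longrightarrow> C \<noteq> {} \<longrightarrow>
        {c \<in> C. fiber f B c \<noteq> {} \<and> dim (fiber f B c) = k} \<in> S m) \<and>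
     (\<forall>n m f B C k. definable_map S n m f B C \<longrightarrow> B \<noteq> {} \<longrightarrow>
        (\<forall>c \<in> f ` B. dim (fiber f B c) = k) \<longrightarrow> dim B = dim (f ` B) + k)"

text \<open>Members of a uniformly definable family: X_a = {y. a @ y \<in> X}.\<close>
definition fam :: "'a list set \<Rightarrow> 'a list \<Rightarrow> 'a list set" where
  "fam X a = {y. a @ y \<in> X}"

end

theory Submission
  imports Defs
begin

text \<open>Double counting on the incidence set Z = {(a, x). a \<in> A, x \<in> [X_a]_r}, with pairs
  encoded as concatenated tuples. Projecting Z onto A, the fibre over a is a copy of
  [X_a]_r, of dimension d; projecting onto U_r, the fibre over x is a copy of
  {a \<in> A. x \<in> X_a}, of dimension r by the definition of U_r. Axiom (A2) applied to both
  projections gives dim Z = dim A + d = dim U_r + r; axiom (A1) makes U_r, and hence Z,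
  definable.\<close>

definition append_prod :: "'a list set \<Rightarrow> 'a list set \<Rightarrow> 'a list set" where
  "append_prod P Q = {xs @ ys | xs ys. xs \<in> P \<and> ys \<in> Q}"

lemma mem_append_prod: "w \<in> append_prod P Q \<longleftrightarrow> (\<exists>xs ys. w = xs @ ys \<and> xs \<in> P \<and> ys \<in> Q)"
  by (simp add: append_prod_def)

lemma mem_append_prod_take_drop:
  assumes "P \<subseteq> tuples n"
  shows "z \<in> append_prod P Q \<longleftrightarrow> take n z \<in> P \<and> drop n z \<in> Q"
proof
  assume "z \<in> append_prod P Q"
  then obtain xs ys where "z = xs @ ys" "xs \<in> P" "ys \<in> Q"
    unfolding mem_append_prod by blast
  moreover have "length xs = n" using assms \<open>xs \<in> P\<close> by (auto simp: tuples_def)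
  ultimately show "take n z \<in> P \<and> drop n z \<in> Q" by simp
next
  assume "take n z \<in> P \<and> drop n z \<in> Q"
  then show "z \<in> append_prod P Q"
    unfolding mem_append_prod by (metis append_take_drop_id)
qed

lemma append_prod_assoc: "append_prod (append_prod P Q) R = append_prod P (append_prod Q R)"
  unfolding set_eq_iff mem_append_prod by (metis append_assoc)

lemma tuples_add: "tuples (m + l) = append_prod (tuples m) (tuples l)"
  unfolding set_eq_iff mem_append_prod_take_drop[OF order_refl] by (auto simp: tuples_def)

lemma append_prod_tuples_1: "append_prod P (tuples 1) = {xs @ [y] | xs y. xs \<in> P}"
  unfolding set_eq_iff mem_append_prod by (auto simp: tuples_def length_Suc_conv)

lemma tuples_1_append_prod: "append_prod (tuples 1) P = {y # xs | xs y. xs \<in> P}"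
  unfolding set_eq_iff mem_append_prod
  by (auto simp: tuples_def length_Suc_conv) (metis append_Cons append_Nil)

lemma fam_subset_tuples: "X \<subseteq> tuples (n + k) \<Longrightarrow> length a = n \<Longrightarrow> fam X a \<subseteq> tuples k"
  by (auto simp: fam_def tuples_def)

context
  fixes A X :: "'a list set" and n k :: nat
  assumes A: "A \<subseteq> tuples n" and X: "X \<subseteq> tuples (n + k)"
begin

lemma take_image_Int_append_prod:
  "take n ` (X \<inter> append_prod A V) = {a \<in> A. fam X a \<inter> V \<noteq> {}}"
proof (intro set_eqI iffI)
  fix a assume "a \<in> {a \<in> A. fam X a \<inter> V \<noteq> {}}"
  then obtain x where "a \<in> A" "a @ x \<in> X" "x \<in> V" by (auto simp: fam_def)
  moreover have "length a = n" using A \<open>a \<in> A\<close> by (auto simp: tuples_def)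
  ultimately have "a @ x \<in> X \<inter> append_prod A V" "take n (a @ x) = a"
    by (auto simp: mem_append_prod)
  then show "a \<in> take n ` (X \<inter> append_prod A V)" by force
next
  fix a assume "a \<in> take n ` (X \<inter> append_prod A V)"
  then obtain z where "z \<in> X" "take n z \<in> A" "drop n z \<in> V" "a = take n z"
    by (auto simp: mem_append_prod_take_drop[OF A])
  moreover from this have "drop n z \<in> fam X (take n z)" by (simp add: fam_def)
  ultimately show "a \<in> {a \<in> A. fam X a \<inter> V \<noteq> {}}" by blast
qed

lemma drop_image_Int_append_prod:
  "drop n ` (X \<inter> append_prod A V) = V \<inter> (\<Union>a \<in> A. fam X a)"
proof (intro set_eqI iffI)
  fix x assume "x \<in> V \<inter> (\<Union>a \<in> A. fam X a)"
  then obtain a where "a \<in> A" "a @ x \<in> X" "x \<in> V" by (auto simp: fam_def)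
  moreover have "length a = n" using A \<open>a \<in> A\<close> by (auto simp: tuples_def)
  ultimately have "a @ x \<in> X \<inter> append_prod A V" "drop n (a @ x) = x"
    by (auto simp: mem_append_prod)
  then show "x \<in> drop n ` (X \<inter> append_prod A V)" by force
next
  fix x assume "x \<in> drop n ` (X \<inter> append_prod A V)"
  then obtain z where "z \<in> X" "take n z \<in> A" "drop n z \<in> V" "x = drop n z"
    by (auto simp: mem_append_prod_take_drop[OF A])
  moreover from this have "drop n z \<in> fam X (take n z)" by (simp add: fam_def)
  ultimately show "x \<in> V \<inter> (\<Union>a \<in> A. fam X a)" by blast
qed

lemma fam_Int_append_prod: "a \<in> A \<Longrightarrow> fam (X \<inter> append_prod A V) a = fam X a \<inter> V"
  using A by (auto simp: fam_def mem_append_prod_take_drop[OF A] tuples_def)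

lemma cosection_Int_append_prod:
  assumes "length x = k" "x \<in> V"
  shows "{b. b @ x \<in> X \<inter> append_prod A V} = {a \<in> A. x \<in> fam X a}"
  using A X assms by (auto simp: fam_def mem_append_prod_take_drop[OF A] tuples_def)

end

context
  fixes S :: "nat \<Rightarrow> 'a list set set"
  assumes S: "definable_structure S"
begin

lemma definable_subset_tuples: "A \<in> S n \<Longrightarrow> A \<subseteq> tuples n"
  using S by (auto simp: definable_structure_def)

lemma definable_tuples: "tuples n \<in> S n"
  using S by (auto simp: definable_structure_def)

lemma definable_Un: "A \<in> S n \<Longrightarrow> B \<in> S n \<Longrightarrow> A \<union> B \<in> S n"
  using S unfolding definable_structure_def by (elim conjE) simp

lemma definable_complement: "A \<in> S n \<Longrightarrow> tuples n - A \<in> S n"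
  using S unfolding definable_structure_def by (elim conjE) simp

lemma definable_nth_eq: "i < n \<Longrightarrow> j < n \<Longrightarrow> {xs \<in> tuples n. xs ! i = xs ! j} \<in> S n"
  using S unfolding definable_structure_def by (elim conjE) simp

lemma definable_append_prod_tuples_1: "A \<in> S n \<Longrightarrow> append_prod A (tuples 1) \<in> S (Suc n)"
  using S unfolding append_prod_tuples_1 definable_structure_def by (elim conjE) simp

lemma definable_tuples_1_append_prod: "A \<in> S n \<Longrightarrow> append_prod (tuples 1) A \<in> S (Suc n)"
  using S unfolding tuples_1_append_prod definable_structure_def by (elim conjE) simp

lemma definable_Int:
  assumes "A \<in> S n" "B \<in> S n"
  shows "A \<inter> B \<in> S n"
proof -
  have "A \<inter> B = tuples n - ((tuples n - A) \<union> (tuples n - B))"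
    using assms by (auto dest: definable_subset_tuples)
  moreover have "tuples n - ((tuples n - A) \<union> (tuples n - B)) \<in> S n"
    using assms by (intro definable_complement definable_Un)
  ultimately show ?thesis by simp
qed

lemma definable_append_prod_tuples_right:
  assumes "A \<in> S n"
  shows "append_prod A (tuples m) \<in> S (n + m)"
proof (induction m)
  case 0
  have "append_prod A (tuples 0) = A" by (simp add: append_prod_def tuples_def)
  with assms show ?case by simp
next
  case (Suc m)
  have "append_prod A (tuples (Suc m)) = append_prod (append_prod A (tuples m)) (tuples 1)"
    unfolding append_prod_assoc tuples_add[symmetric] by simp
  with definable_append_prod_tuples_1[OF Suc.IH] show ?case by simp
qed

lemma definable_append_prod_tuples_left:
  assumes "A \<in> S n"
  shows "append_prod (tuples m) A \<in> S (m + n)"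
proof (induction m)
  case 0
  have "append_prod (tuples 0) A = A" by (simp add: append_prod_def tuples_def)
  with assms show ?case by simp
next
  case (Suc m)
  have "append_prod (tuples (Suc m)) A = append_prod (tuples 1) (append_prod (tuples m) A)"
    unfolding append_prod_assoc[symmetric] tuples_add[symmetric] by simp
  with definable_tuples_1_append_prod[OF Suc.IH] show ?case by simp
qed

lemma definable_append_prod:
  assumes "A \<in> S n" "B \<in> S m"
  shows "append_prod A B \<in> S (n + m)"
proof -
  have "append_prod A B = append_prod A (tuples m) \<inter> append_prod (tuples n) B"
    using definable_subset_tuples[OF assms(1)] definable_subset_tuples[OF assms(2)]
    unfolding set_eq_iff Int_iff mem_append_prod_take_drop[OF order_refl]
      mem_append_prod_take_drop[OF definable_subset_tuples[OF assms(1)]]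
    by (auto simp: tuples_def)
  then show ?thesis
    using definable_Int definable_append_prod_tuples_left definable_append_prod_tuples_right assms
    by metis
qed

lemma definable_singleton: "{p} \<in> S (length p)"
proof (induction p)
  case Nil
  have "{[] :: 'a list} = tuples 0" by (auto simp: tuples_def)
  with definable_tuples[of 0] show ?case by simp
next
  case (Cons c p)
  have "{[c]} \<in> S 1" using S unfolding definable_structure_def by (elim conjE) simp
  moreover have "{c # p} = append_prod {[c]} {p}" by (simp add: append_prod_def)
  ultimately show ?case using definable_append_prod[OF _ Cons, of "{[c]}" 1] by simp
qed

lemma definable_nths_eq:
  assumes "p + j \<le> N" "q + j \<le> N"
  shows "{z \<in> tuples N. \<forall>l<j. z ! (p + l) = z ! (q + l)} \<in> S N"
  using assms
proof (induction j)
  case 0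
  then show ?case using definable_tuples by simp
next
  case (Suc j)
  have split: "{z \<in> tuples N. \<forall>l<Suc j. z ! (p + l) = z ! (q + l)} =
        {z \<in> tuples N. \<forall>l<j. z ! (p + l) = z ! (q + l)} \<inter>
        {z \<in> tuples N. z ! (p + j) = z ! (q + j)}"
    by (auto simp: less_Suc_eq)
  have "{z \<in> tuples N. z ! (p + j) = z ! (q + j)} \<in> S N"
    using Suc.prems by (intro definable_nth_eq) simp_all
  moreover have "{z \<in> tuples N. \<forall>l<j. z ! (p + l) = z ! (q + l)} \<in> S N"
    using Suc by simp
  ultimately show ?case
    unfolding split by (rule definable_Int[rotated])
qed

lemma definable_map_take_drop:
  assumes B: "B \<in> S N" and ij: "i + j \<le> N"
  shows "definable_map S N j (\<lambda>z. take j (drop i z)) B (tuples j)"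
proof -
  have len: "length z = N" if "z \<in> B" for z
    using definable_subset_tuples[OF B] that by (auto simp: tuples_def)
  let ?E = "{z \<in> tuples (N + j). \<forall>l<j. z ! (i + l) = z ! (N + l)}"
  have "{z @ take j (drop i z) | z. z \<in> B} = append_prod B (tuples j) \<inter> ?E"
  proof (intro set_eqI iffI)
    fix w assume "w \<in> {z @ take j (drop i z) | z. z \<in> B}"
    then obtain z where w: "w = z @ take j (drop i z)" and z: "z \<in> B" by blast
    have "w \<in> append_prod B (tuples j)"
      unfolding w mem_append_prod
      by (rule exI[of _ z], rule exI[of _ "take j (drop i z)"])
        (use z len[OF z] ij in \<open>simp add: tuples_def\<close>)
    moreover have "w \<in> ?E"
      unfolding w using len[OF z] ij by (simp add: tuples_def nth_append)
    ultimately show "w \<in> append_prod B (tuples j) \<inter> ?E" ..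
  next
    fix w assume w: "w \<in> append_prod B (tuples j) \<inter> ?E"
    then obtain z ys where z: "w = z @ ys" "z \<in> B" "length ys = j"
      by (auto simp: mem_append_prod tuples_def)
    have "ys = take j (drop i z)"
    proof (rule nth_equalityI)
      fix l assume "l < length ys"
      then have "w ! (i + l) = w ! (N + l)" "i + l < N" using w z(3) ij by simp_all
      then show "ys ! l = take j (drop i z) ! l"
        using z len[OF z(2)] \<open>l < length ys\<close> by (simp add: nth_append)
    qed (use z len ij in simp)
    with z show "w \<in> {z @ take j (drop i z) | z. z \<in> B}" by blast
  qed
  moreover have "append_prod B (tuples j) \<inter> ?E \<in> S (N + j)"
    using ij
    by (intro definable_Int definable_append_prod[OF B definable_tuples] definable_nths_eq) simp_all
  ultimately show ?thesis
    unfolding definable_map_def using B definable_tuples len ij by (auto simp: tuples_def)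
qed

lemma definable_map_cong:
  assumes "definable_map S N m f B C" "\<And>z. z \<in> B \<Longrightarrow> f z = g z"
  shows "definable_map S N m g B C"
proof -
  have "{z @ f z | z. z \<in> B} = {z @ g z | z. z \<in> B}" "f ` B = g ` B"
    using assms(2) by force+
  with assms(1) show ?thesis unfolding definable_map_def by simp
qed

lemma definable_map_take:
  "B \<in> S (n + k) \<Longrightarrow> definable_map S (n + k) n (take n) B (tuples n)"
  using definable_map_take_drop[of B "n + k" 0 n] by simp

lemma definable_map_drop:
  assumes "B \<in> S (n + k)"
  shows "definable_map S (n + k) k (drop n) B (tuples k)"
proof (rule definable_map_cong[OF definable_map_take_drop[OF assms, of n k]])
  show "take k (drop n z) = drop n z" if "z \<in> B" for z
    using definable_subset_tuples[OF assms] that by (auto simp: tuples_def)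
qed simp

end

context
  fixes S :: "nat \<Rightarrow> 'a list set set" and dim :: "'a list set \<Rightarrow> nat"
  assumes S: "definable_structure S" and D: "dimension S dim"
begin

lemma definable_dim_fiber_level:
  "definable_map S n m f B C \<Longrightarrow> B \<noteq> {} \<Longrightarrow> C \<noteq> {} \<Longrightarrow>
    {c \<in> C. fiber f B c \<noteq> {} \<and> dim (fiber f B c) = k} \<in> S m"
  using D unfolding dimension_def by blast

lemma dim_eq_dim_image_add:
  "definable_map S n m f B C \<Longrightarrow> B \<noteq> {} \<Longrightarrow>
    (\<And>c. c \<in> f ` B \<Longrightarrow> dim (fiber f B c) = k) \<Longrightarrow> dim B = dim (f ` B) + k"
  using D unfolding dimension_def by blast

lemma dim_singleton: "dim {p} = 0"
proof -
  have "{xs @ xs | xs. xs \<in> {p}} = {p @ p}" by auto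
  then have "definable_map S (length p) (length p) id {p} {p}"
    using definable_singleton[OF S, of p] definable_singleton[OF S, of "p @ p"]
    by (simp add: definable_map_def)
  moreover have "fiber id {p} p = {p}" by (auto simp: fiber_def)
  ultimately have "dim {p} = dim (id ` {p}) + dim {p}"
    by (intro dim_eq_dim_image_add) auto
  then show ?thesis by simp
qed

lemma dim_image_inj:
  assumes "definable_map S n m f B C" "B \<noteq> {}" "inj_on f B"
  shows "dim (f ` B) = dim B"
proof -
  have "fiber f B (f b) = {b}" if "b \<in> B" for b
    using assms(3) that by (auto simp: fiber_def inj_on_def)
  then have "dim B = dim (f ` B) + 0"
    using assms(1,2) by (intro dim_eq_dim_image_add) (auto simp: dim_singleton)
  then show ?thesis by simp
qed

lemma dim_fiber_take:
  assumes Z: "Z \<in> S (n + k)" and a: "a \<in> take n ` Z"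
  shows "dim (fiber (take n) Z a) = dim (fam Z a)"
proof -
  have Z_sub: "Z \<subseteq> tuples (n + k)" using definable_subset_tuples[OF S Z] .
  have len_a: "length a = n" using a Z_sub by (auto simp: tuples_def)
  have fiber_eq: "fiber (take n) Z a = Z \<inter> append_prod {a} (tuples k)"
    using Z_sub len_a
    by (auto simp: fiber_def mem_append_prod_take_drop[of _ n] tuples_def)
  have "fiber (take n) Z a \<in> S (n + k)"
    unfolding fiber_eq using definable_singleton[OF S, of a] len_a
    by (intro definable_Int[OF S] Z definable_append_prod[OF S] definable_tuples[OF S]) auto
  moreover have "fiber (take n) Z a \<noteq> {}" using a by (auto simp: fiber_def)
  moreover have "inj_on (drop n) (fiber (take n) Z a)"
    by (auto simp: inj_on_def fiber_def) (metis append_take_drop_id)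
  moreover have "drop n ` fiber (take n) Z a = fam Z a"
  proof (intro set_eqI iffI)
    fix x assume "x \<in> fam Z a"
    then have "a @ x \<in> fiber (take n) Z a" using len_a by (simp add: fam_def fiber_def)
    then show "x \<in> drop n ` fiber (take n) Z a" using len_a by force
  qed (auto simp: fiber_def fam_def)
  ultimately show ?thesis
    using dim_image_inj[OF definable_map_drop[OF S]] by metis
qed

lemma dim_fiber_drop:
  assumes Z: "Z \<in> S (n + k)" and x: "x \<in> drop n ` Z"
  shows "dim (fiber (drop n) Z x) = dim {a. a @ x \<in> Z}"
proof -
  have Z_sub: "Z \<subseteq> tuples (n + k)" using definable_subset_tuples[OF S Z] .
  have len_x: "length x = k" using x Z_sub by (auto simp: tuples_def)
  have fiber_eq: "fiber (drop n) Z x = Z \<inter> append_prod (tuples n) {x}"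
    unfolding set_eq_iff Int_iff mem_append_prod_take_drop[OF order_refl]
    using Z_sub by (auto simp: fiber_def tuples_def)
  have "fiber (drop n) Z x \<in> S (n + k)"
    unfolding fiber_eq using definable_singleton[OF S, of x] len_x
    by (intro definable_Int[OF S] Z definable_append_prod[OF S] definable_tuples[OF S]) auto
  moreover have "fiber (drop n) Z x \<noteq> {}" using x by (auto simp: fiber_def)
  moreover have "inj_on (take n) (fiber (drop n) Z x)"
    by (auto simp: inj_on_def fiber_def) (metis append_take_drop_id)
  moreover have "take n ` fiber (drop n) Z x = {a. a @ x \<in> Z}"
  proof (intro set_eqI iffI)
    fix a assume "a \<in> {a. a @ x \<in> Z}"
    moreover from this have "length a = n" using Z_sub len_x by (auto simp: tuples_def)
    ultimately have "a @ x \<in> fiber (drop n) Z x" "take n (a @ x) = a"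
      by (simp_all add: fiber_def)
    then show "a \<in> take n ` fiber (drop n) Z x" by force
  qed (auto simp: fiber_def)
  ultimately show ?thesis
    using dim_image_inj[OF definable_map_take[OF S]] by metis
qed

lemma dim_double_counting:
  assumes Z: "Z \<in> S (n + k)" "Z \<noteq> {}"
    and sections: "\<And>a. a \<in> take n ` Z \<Longrightarrow> dim (fam Z a) = d"
    and cosections: "\<And>x. x \<in> drop n ` Z \<Longrightarrow> dim {a. a @ x \<in> Z} = r"
  shows "dim (drop n ` Z) + r = dim (take n ` Z) + d"
proof -
  have "dim Z = dim (drop n ` Z) + r"
    using Z by (intro dim_eq_dim_image_add[OF definable_map_drop[OF S]])
      (simp_all add: dim_fiber_drop cosections)
  moreover have "dim Z = dim (take n ` Z) + d"
    using Z by (intro dim_eq_dim_image_add[OF definable_map_take[OF S]])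
      (simp_all add: dim_fiber_take sections)
  ultimately show ?thesis by simp
qed

lemma definable_cosection_dim_level:
  assumes Z: "Z \<in> S (n + k)"
  shows "{x \<in> drop n ` Z. dim {a. a @ x \<in> Z} = r} \<in> S k"
proof (cases "Z = {}")
  case True
  have "tuples k - tuples k \<in> S k"
    using definable_complement[OF S definable_tuples[OF S]] .
  with True show ?thesis by simp
next
  case False
  have image_sub: "drop n ` Z \<subseteq> tuples k"
    using definable_subset_tuples[OF S Z] by (auto simp: tuples_def)
  have fiber_ne: "fiber (drop n) Z x \<noteq> {} \<longleftrightarrow> x \<in> drop n ` Z" for x
    by (auto simp: fiber_def)
  have "{x \<in> drop n ` Z. dim {a. a @ x \<in> Z} = r} =
      {x \<in> tuples k. fiber (drop n) Z x \<noteq> {} \<and> dim (fiber (drop n) Z x) = r}"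
    unfolding fiber_ne using image_sub by (auto simp: dim_fiber_drop[OF Z])
  moreover have "tuples k \<noteq> ({} :: 'a list set)" using image_sub False by blast
  ultimately show ?thesis
    using definable_dim_fiber_level[OF definable_map_drop[OF S Z] False] by simp
qed

lemma definable_Union_fam_dim_level:
  assumes A: "A \<in> S n" and X: "X \<in> S (n + k)"
  shows "{x \<in> (\<Union>a \<in> A. fam X a). dim {a \<in> A. x \<in> fam X a} = r} \<in> S k"
proof -
  have A_sub: "A \<subseteq> tuples n" and X_sub: "X \<subseteq> tuples (n + k)"
    using A X definable_subset_tuples[OF S] by auto
  let ?U = "\<Union>a \<in> A. fam X a"
  define F where "F = X \<inter> append_prod A (tuples k)"
  have U_sub: "?U \<subseteq> tuples k"
    using fam_subset_tuples[OF X_sub] A_sub by (auto simp: tuples_def)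
  then have drop_F: "drop n ` F = ?U"
    by (auto simp: F_def drop_image_Int_append_prod[OF A_sub X_sub])
  have cosection_F: "{b. b @ x \<in> F} = {a \<in> A. x \<in> fam X a}" if "x \<in> ?U" for x
    unfolding F_def using that U_sub
    by (intro cosection_Int_append_prod[OF A_sub X_sub]) (auto simp: tuples_def)
  have "{x \<in> ?U. dim {a \<in> A. x \<in> fam X a} = r} =
      {x \<in> drop n ` F. dim {b. b @ x \<in> F} = r}"
    by (intro Collect_cong) (simp add: drop_F cosection_F cong: conj_cong)
  moreover have "F \<in> S (n + k)"
    unfolding F_def
    by (intro definable_Int[OF S X] definable_append_prod[OF S A] definable_tuples[OF S])
  ultimately show ?thesis
    using definable_cosection_dim_level[of F n k r] by simp
qed

lemma dim_family_double_counting: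
  assumes A: "A \<in> S n" "A \<noteq> {}" and X: "X \<in> S (n + k)"
    and V: "V \<in> S k" "V \<subseteq> (\<Union>a \<in> A. fam X a)"
    and meets: "\<And>a. a \<in> A \<Longrightarrow> fam X a \<inter> V \<noteq> {}"
    and sections: "\<And>a. a \<in> A \<Longrightarrow> dim (fam X a \<inter> V) = d"
    and cosections: "\<And>x. x \<in> V \<Longrightarrow> dim {a \<in> A. x \<in> fam X a} = r"
  shows "dim V + r = dim A + d"
proof -
  have A_sub: "A \<subseteq> tuples n" and X_sub: "X \<subseteq> tuples (n + k)" and V_sub: "V \<subseteq> tuples k"
    using A X V definable_subset_tuples[OF S] by auto
  define Z where "Z = X \<inter> append_prod A V"
  have take_Z: "take n ` Z = A"
    using meets by (auto simp: Z_def take_image_Int_append_prod[OF A_sub X_sub])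
  have drop_Z: "drop n ` Z = V"
    using V(2) by (auto simp: Z_def drop_image_Int_append_prod[OF A_sub X_sub])
  have "dim (drop n ` Z) + r = dim (take n ` Z) + d"
  proof (rule dim_double_counting)
    show "Z \<in> S (n + k)"
      unfolding Z_def by (intro definable_Int[OF S X] definable_append_prod[OF S A(1) V(1)])
    show "Z \<noteq> {}" using take_Z A(2) by auto
    show "dim (fam Z a) = d" if "a \<in> take n ` Z" for a
    proof -
      have "a \<in> A" using that take_Z by simp
      with sections show ?thesis by (simp add: Z_def fam_Int_append_prod[OF A_sub X_sub])
    qed
    show "dim {a. a @ x \<in> Z} = r" if "x \<in> drop n ` Z" for x
    proof -
      have "x \<in> V" "length x = k" using that drop_Z V_sub by (auto simp: tuples_def)
      then have "{a. a @ x \<in> Z} = {a \<in> A. x \<in> fam X a}"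
        unfolding Z_def by (intro cosection_Int_append_prod[OF A_sub X_sub])
      with cosections \<open>x \<in> V\<close> show ?thesis by simp
    qed
  qed
  then show ?thesis by (simp add: take_Z drop_Z)
qed

end

theorem proposition3p2:
  fixes S :: "nat \<Rightarrow> 'a list set set" and dim :: "'a list set \<Rightarrow> nat"
    and A X :: "'a list set" and n k r d :: nat
  assumes struct: "definable_structure S"
    and dimS: "dimension S dim"
    and A_def: "A \<in> S n" and A_ne: "A \<noteq> {}"
    and X_def: "X \<in> S (n + k)"
    and inj: "\<forall>a \<in> A. \<forall>a' \<in> A. fam X a = fam X a' \<longleftrightarrow> a = a'"
    and r_le: "r \<le> dim A"
    and nonempty: "\<forall>a \<in> A. fam X a \<inter>
        {x \<in> (\<Union>a \<in> A. fam X a). dim {a \<in> A. x \<in> fam X a} = r} \<noteq> {}"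
    and const: "\<forall>a \<in> A. dim (fam X a \<inter>
        {x \<in> (\<Union>a \<in> A. fam X a). dim {a \<in> A. x \<in> fam X a} = r}) = d"
  shows "dim {x \<in> (\<Union>a \<in> A. fam X a). dim {a \<in> A. x \<in> fam X a} = r} + r = dim A + d"
proof -
  let ?Ur = "{x \<in> (\<Union>a \<in> A. fam X a). dim {a \<in> A. x \<in> fam X a} = r}"
  show ?thesis
  proof (rule dim_family_double_counting[OF struct dimS A_def A_ne X_def])
    show "?Ur \<in> S k"
      by (rule definable_Union_fam_dim_level[OF struct dimS A_def X_def])
    show "?Ur \<subseteq> (\<Union>a \<in> A. fam X a)" by blast
    show "fam X a \<inter> ?Ur \<noteq> {}" "dim (fam X a \<inter> ?Ur) = d" if "a \<in> A" for a
      using nonempty const that by blast+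
    show "dim {a \<in> A. x \<in> fam X a} = r" if "x \<in> ?Ur" for x
      using that by blast
  qed
qed

end
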